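(* Let Assumptions 1 and 2 (stated in the context) hold and let $g',g''\in L^2[0,1]$. Put $C_1=(\tilde x_2-\tilde x_1)^{1/2}/\min\{\tilde x_1-x_1,\ x_2-\tilde x_2\}$, $c_p=\min\{1-w_2,w_1\}\min\{C_F-1,2\}c_Wc_f/4$ and $\bar C=C_1/c_p$. If there exists $h\in L^2[0,1]$ such that $g'-g''+h\in\mathcal M$ and $$\|h\|_{2,t}+\bar C\|T\|_2\|h\|_2<\|g'-g''\|_{2,t},$$ then $g'$ and $g''$ are not observationally equivalent, i.e. it is not the case that $E[g'(X)-g''(X)\mid W]=0$ almost surely (equivalently, $\|T(g'-g'')\|_2>0$).
   Context: Let $(X,W)$ be a random pair with values in $[0,1]^2$; $F_{X|W}(x|w)$, $f_{X|W}(x|w)$, $f_{X,W}$, $f_W$ denote the conditional distribution function of $X$ given $W=w$, the conditional density, the joint density and the marginal density of $W$. Fix constants $0\le x_1<\tilde x_1<\tilde x_2<x_2\le1$ and $0<w_1<w_2<1$. "Increasing" means non-decreasing and "decreasing" means non-increasing. Assumption 1 (Monotone IV): (a) for all $x,w',w''\in(0,1)$ with $w'\le w''$, $F_{X|W}(x|w')\ge F_{X|W}(x|w'')$; (b) there is a constant $C_F>1$ such that $F_{X|W}(x|w_1)\ge C_F F_{X|W}(x|w_2)$ for all $x\in(0,x_2)$, and $C_F(1-F_{X|W}(x|w_1))\le 1-F_{X|W}(x|w_2)$ for all $x\in(x_1,1)$. Assumption 2 (Density): (i) $(X,W)$ has a density $f_{X,W}$ with respect to Lebesgue measure on $[0,1]^2$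 with $\int_0^1\int_0^1 f_{X,W}(x,w)^2\,dx\,dw\le C_T$ for a finite constant $C_T$; (ii) there is $c_f>0$ with $f_{X|W}(x|w)\ge c_f$ for all $x\in[x_1,x_2]$ and $w\in\{w_1,w_2\}$; (iii) there are constants $0<c_W\le C_W<\infty$ with $c_W\le f_W(w)\le C_W$ for all $w\in[0,1]$. The operator $T:L^2[0,1]\to L^2[0,1]$ is $(Th)(w)=E[h(X)\mid W=w]f_W(w)=\int_0^1 h(x)f_{X,W}(x,w)\,dx$, with operator norm $\|T\|_2=\sup_{\|h\|_2=1}\|Th\|_2$. The truncated norm is $\|h\|_{2,t}=\big(\int_{\tilde x_1}^{\tilde x_2}h(x)^2dx\big)^{1/2}$. $\mathcal M$ denotes the set of all monotone (increasing or decreasing) functions in $L^2[0,1]$. *)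

theory Defs
  imports "HOL-Analysis.Analysis"
begin

text \<open>The joint density of (X,W) is represented by a function f with f x w = f_{X,W}(x,w);
  all quantities are computed on the unit square [0,1]^2.\<close>

definition joint_density :: "(real \<Rightarrow> real \<Rightarrow> real) \<Rightarrow> bool" where
  "joint_density f \<longleftrightarrow>
     (\<forall>x\<in>{0..1}. \<forall>w\<in>{0..1}. 0 \<le> f x w) \<and>
     (\<lambda>(x,w). f x w) \<in> borel_measurable (lborel \<Otimes>\<^sub>M lborel) \<and>
     set_integrable (lborel \<Otimes>\<^sub>M lborel) ({0..1} \<times> {0..1}) (\<lambda>(x,w). f x w) \<and>
     (LINT p:({0..1} \<times> {0..1})|(lborel \<Otimes>\<^sub>M lborel). (\<lambda>(x,w). f x w) p) = 1"

definition fW :: "(real \<Rightarrow> real \<Rightarrow> real) \<Rightarrow> real \<Rightarrow> real" where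
  "fW f w = (LINT x:{0..1}|lborel. f x w)"

definition fXgW :: "(real \<Rightarrow> real \<Rightarrow> real) \<Rightarrow> real \<Rightarrow> real \<Rightarrow> real" where
  "fXgW f x w = f x w / fW f w"

definition FXgW :: "(real \<Rightarrow> real \<Rightarrow> real) \<Rightarrow> real \<Rightarrow> real \<Rightarrow> real" where
  "FXgW f x w = (LINT t:{0..x}|lborel. f t w) / fW f w"

definition L2 :: "(real \<Rightarrow> real) \<Rightarrow> bool" where
  "L2 h \<longleftrightarrow> h \<in> borel_measurable lborel \<and> set_integrable lborel {0..1} (\<lambda>x. (h x)\<^sup>2)"

definition norm2 :: "(real \<Rightarrow> real) \<Rightarrow> real" where
  "norm2 h = sqrt (LINT x:{0..1}|lborel. (h x)\<^sup>2)"

definition norm2t :: "real \<Rightarrow> real \<Rightarrow> (real \<Rightarrow> real) \<Rightarrow> real" where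
  "norm2t a b h = sqrt (LINT x:{a..b}|lborel. (h x)\<^sup>2)"

definition Top :: "(real \<Rightarrow> real \<Rightarrow> real) \<Rightarrow> (real \<Rightarrow> real) \<Rightarrow> real \<Rightarrow> real" where
  "Top f h w = (LINT x:{0..1}|lborel. h x * f x w)"

definition opnorm :: "(real \<Rightarrow> real \<Rightarrow> real) \<Rightarrow> real" where
  "opnorm f = Sup {norm2 (Top f h) | h. L2 h \<and> norm2 h = 1}"

definition inM :: "(real \<Rightarrow> real) \<Rightarrow> bool" where
  "inM u \<longleftrightarrow> L2 u \<and> (\<exists>m. (mono_on {0..1} m \<or> antimono_on {0..1} m) \<and>
      (AE x in lborel. x \<in> {0..1} \<longrightarrow> u x = m x))"

end

theory Submission
  imports Defs
begin

text \<open>Put u = g' - g'' + h, monotone by hypothesis. Split u at a level s between u(tx1) and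
  u(tx2) into an increasing and a decreasing part. By stochastic dominance, the ratio conditions
  on F_{X|W} make w2 weight the increasing part C_F times more than w1 does, and w1 the decreasing
  part C_F times more than w2, while the density floor c_f makes one of the parts large. Hence
  E[u(X) | W = w] is at least a fixed multiple of max(|u(tx1)|, |u(tx2)|) in absolute value at w2 or at w1, and,
  as F_{X|W} is monotone in w, on all of (w2, 1) or (0, w1). This gives
  ||u||_{2,t} <= Cbar ||T u||_2, and the triangle inequality together with ||T h|| <= ||T|| ||h||
  turns the hypothesis into ||T (g' - g'')||_2 > 0.\<close>

lemma set_integral_nonneg:
  fixes f :: "'a \<Rightarrow> real"
  assumes "\<And>x. x \<in> S \<Longrightarrow> 0 \<le> f x"
  shows "0 \<le> (LINT x:S|M. f x)"
  unfolding set_lebesgue_integral_def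
  by (rule Bochner_Integration.integral_nonneg) (auto simp: assms indicator_def)

lemma sq_le_mult_if_quadratic_nonneg:
  fixes A B C :: real
  assumes quad: "\<And>t. 0 \<le> A - 2 * t * B + t\<^sup>2 * C" and C: "0 \<le> C"
  shows "B\<^sup>2 \<le> A * C"
proof (cases "C = 0")
  case True
  have "B = 0"
  proof (rule ccontr)
    assume "B \<noteq> 0"
    have "0 \<le> A - 2 * ((A + 1) / (2 * B)) * B" using quad[of "(A + 1) / (2 * B)"] True by simp
    also have "\<dots> = -1" using \<open>B \<noteq> 0\<close> by (simp add: field_simps)
    finally show False by simp
  qed
  then show ?thesis using True by simp
next
  case False
  then have "C > 0" using C by simp
  have "0 \<le> A - 2 * (B / C) * B + (B / C)\<^sup>2 * C" by (rule quad)
  also have "\<dots> = (A * C - B\<^sup>2) / C" using \<open>C > 0\<close> by (simp add: field_simps power2_eq_square)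
  finally show ?thesis using \<open>C > 0\<close> by (simp add: zero_le_divide_iff)
qed

lemma set_integrable_mult_if_square_integrable:
  fixes f g :: "'a \<Rightarrow> real"
  assumes [measurable]: "f \<in> borel_measurable M" "g \<in> borel_measurable M" "S \<in> sets M"
    and "set_integrable M S (\<lambda>x. (f x)\<^sup>2)" "set_integrable M S (\<lambda>x. (g x)\<^sup>2)"
  shows "set_integrable M S (\<lambda>x. f x * g x)"
proof (rule set_integrable_bound)
  show "set_integrable M S (\<lambda>x. (f x)\<^sup>2 + (g x)\<^sup>2)" using assms(4,5) by auto
  show "set_borel_measurable M S (\<lambda>x. f x * g x)" unfolding set_borel_measurable_def by measurable
  have "\<bar>f x * g x\<bar> \<le> (f x)\<^sup>2 + (g x)\<^sup>2" for x
  proof -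
    have "2 * \<bar>f x\<bar> * \<bar>g x\<bar> \<le> \<bar>f x\<bar>\<^sup>2 + \<bar>g x\<bar>\<^sup>2" by (rule sum_squares_bound)
    moreover have "0 \<le> \<bar>f x\<bar> * \<bar>g x\<bar>" by simp
    ultimately show ?thesis unfolding abs_mult power2_abs by linarith
  qed
  then show "AE x in M. x \<in> S \<longrightarrow> norm (f x * g x) \<le> norm ((f x)\<^sup>2 + (g x)\<^sup>2)" by simp
qed

lemma set_integral_Cauchy_Schwarz:
  fixes f g :: "'a \<Rightarrow> real"
  assumes [measurable]: "f \<in> borel_measurable M" "g \<in> borel_measurable M" "S \<in> sets M"
    and f2: "set_integrable M S (\<lambda>x. (f x)\<^sup>2)" and g2: "set_integrable M S (\<lambda>x. (g x)\<^sup>2)"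
  shows "(LINT x:S|M. f x * g x)\<^sup>2 \<le> (LINT x:S|M. (f x)\<^sup>2) * (LINT x:S|M. (g x)\<^sup>2)"
proof (rule sq_le_mult_if_quadratic_nonneg)
  have fg: "set_integrable M S (\<lambda>x. f x * g x)"
    by (rule set_integrable_mult_if_square_integrable[OF assms])
  fix t :: real
  have "0 \<le> (LINT x:S|M. (f x - t * g x)\<^sup>2)" by (rule set_integral_nonneg) simp
  also have "(LINT x:S|M. (f x - t * g x)\<^sup>2) =
      (LINT x:S|M. (f x)\<^sup>2 - (2 * t) * (f x * g x) + t\<^sup>2 * (g x)\<^sup>2)"
    by (simp add: power2_eq_square algebra_simps)
  also have "\<dots> = (LINT x:S|M. (f x)\<^sup>2) - 2 * t * (LINT x:S|M. f x * g x) + t\<^sup>2 * (LINT x:S|M. (g x)\<^sup>2)"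
    using f2 g2 fg by (subst set_integral_add(2)) (auto simp: set_integral_diff)
  finally show "0 \<le> \<dots>" .
qed (rule set_integral_nonneg, simp)

lemma set_integral_Minkowski:
  fixes f g :: "'a \<Rightarrow> real"
  assumes [measurable]: "f \<in> borel_measurable M" "g \<in> borel_measurable M" "S \<in> sets M"
    and f2: "set_integrable M S (\<lambda>x. (f x)\<^sup>2)" and g2: "set_integrable M S (\<lambda>x. (g x)\<^sup>2)"
  shows "sqrt (LINT x:S|M. (f x + g x)\<^sup>2) \<le> sqrt (LINT x:S|M. (f x)\<^sup>2) + sqrt (LINT x:S|M. (g x)\<^sup>2)"
proof -
  define A where "A = (LINT x:S|M. (f x)\<^sup>2)"
  define B where "B = (LINT x:S|M. f x * g x)"
  define C where "C = (LINT x:S|M. (g x)\<^sup>2)"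
  have fg: "set_integrable M S (\<lambda>x. f x * g x)"
    by (rule set_integrable_mult_if_square_integrable[OF assms])
  have A0: "A \<ge> 0" and C0: "C \<ge> 0" unfolding A_def C_def by (auto intro: set_integral_nonneg)
  have "(LINT x:S|M. (f x + g x)\<^sup>2) = (LINT x:S|M. (f x)\<^sup>2 + 2 * (f x * g x) + (g x)\<^sup>2)"
    by (simp add: power2_eq_square algebra_simps)
  also have "\<dots> = A + 2 * B + C"
    unfolding A_def B_def C_def using f2 g2 fg by (subst set_integral_add(2)) auto
  finally have expand: "(LINT x:S|M. (f x + g x)\<^sup>2) = A + 2 * B + C" .
  have "B \<le> sqrt (A * C)"
    using real_sqrt_le_mono[OF set_integral_Cauchy_Schwarz[OF assms]] unfolding A_def B_def C_def
    by (metis real_sqrt_abs abs_ge_self order_trans)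
  then have "A + 2 * B + C \<le> (sqrt A + sqrt C)\<^sup>2"
    using A0 C0 by (simp add: power2_eq_square algebra_simps real_sqrt_mult)
  then have "sqrt (A + 2 * B + C) \<le> sqrt A + sqrt C"
    using A0 C0 by (simp add: real_le_lsqrt)
  then show ?thesis unfolding expand A_def C_def .
qed

lemma staircase_bounds:
  fixes v B :: real and n :: nat
  assumes "0 \<le> v" "v \<le> B" "0 < B" "0 < n"
  shows "v - B / n \<le> B / n * (\<Sum>k\<in>{1..n}. of_bool (real k * B / n \<le> v))"
    and "B / n * (\<Sum>k\<in>{1..n}. of_bool (real k * B / n \<le> v)) \<le> v"
proof -
  define j where "j = nat \<lfloor>v * n / B\<rfloor>"
  have fl0: "0 \<le> \<lfloor>v * n / B\<rfloor>" using assms by simp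
  have jle: "real j \<le> v * n / B" and jgt: "v * n / B < real j + 1"
    unfolding j_def using fl0 by linarith+
  have "v * n / B \<le> n" using assms by (simp add: field_simps)
  then have jn: "j \<le> n" using jle by linarith
  have step_iff: "real k * B / n \<le> v \<longleftrightarrow> k \<le> j" for k :: nat
  proof -
    have "real k * B / n \<le> v \<longleftrightarrow> real k \<le> v * n / B" using assms by (simp add: field_simps)
    also have "\<dots> \<longleftrightarrow> k \<le> j" unfolding j_def using fl0 by (simp add: le_floor_iff le_nat_iff)
    finally show ?thesis .
  qed
  have "(\<Sum>k\<in>{1..n}. of_bool (real k * B / n \<le> v)) = real (card ({1..n} \<inter> {k. k \<le> j}))"
    by (simp add: step_iff of_bool_def sum.If_cases)
  also have "{1..n} \<inter> {k. k \<le> j} = {1..j}" using jn by auto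
  finally have sum_eq: "(\<Sum>k\<in>{1..n}. of_bool (real k * B / n \<le> v)) = real j" by simp
  show "v - B / n \<le> B / n * (\<Sum>k\<in>{1..n}. of_bool (real k * B / n \<le> v))"
  proof -
    have "v < B / n * j + B / n" using jgt assms by (simp add: field_simps)
    then show ?thesis unfolding sum_eq by simp
  qed
  show "B / n * (\<Sum>k\<in>{1..n}. of_bool (real k * B / n \<le> v)) \<le> v"
    using jle assms unfolding sum_eq by (simp add: field_simps)
qed

text \<open>Layer-cake comparison: approximating \<open>\<phi>\<close> from below by the staircase
  \<open>B/n \<Sum>\<^sub>k 1{\<phi> \<ge> kB/n}\<close> reduces \<open>\<integral>\<phi>Q \<le> \<integral>\<phi>P\<close> to the superlevel sets, up to an error \<open>B/n \<integral>Q\<close>.\<close>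

lemma integral_mult_le_add_staircase_error:
  fixes \<phi> P Q :: "real \<Rightarrow> real" and n :: nat
  assumes [measurable]: "\<phi> \<in> borel_measurable lborel"
    and P: "integrable lborel P" and Q: "integrable lborel Q"
    and P0: "\<And>x. 0 \<le> P x" and Q0: "\<And>x. 0 \<le> Q x"
    and \<phi>0: "\<And>x. 0 \<le> \<phi> x" and \<phi>B: "\<And>x. \<phi> x \<le> B" and n: "0 < n" "0 < B"
    and levels: "\<And>c. c > 0 \<Longrightarrow> (\<integral>x. indicator {x. c \<le> \<phi> x} x * Q x \<partial>lborel)
                                 \<le> (\<integral>x. indicator {x. c \<le> \<phi> x} x * P x \<partial>lborel)"
  shows "(\<integral>x. \<phi> x * Q x \<partial>lborel) \<le> (\<integral>x. \<phi> x * P x \<partial>lborel) + B / n * (\<integral>x. Q x \<partial>lborel)"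
proof -
  have [measurable]: "P \<in> borel_measurable lborel" "Q \<in> borel_measurable lborel"
    using P Q by auto
  have \<phi>_int: "integrable lborel (\<lambda>x. \<phi> x * R x)" if R: "integrable lborel R" "\<And>x. 0 \<le> R x" for R
  proof (rule Bochner_Integration.integrable_bound[OF integrable_mult_right[OF R(1), of B]])
    show "(\<lambda>x. \<phi> x * R x) \<in> borel_measurable lborel" using R(1) by auto
    show "AE x in lborel. norm (\<phi> x * R x) \<le> norm (B * R x)"
      using \<phi>0 \<phi>B R(2) n by (auto simp: abs_mult intro!: mult_right_mono)
  qed
  have level_int: "integrable lborel (\<lambda>x. indicator {x. c \<le> \<phi> x} x * R x)"
    if "integrable lborel R" for R :: "real \<Rightarrow> real" and c
    using integrable_mult_indicator[of "{x. c \<le> \<phi> x}" lborel R] that by simp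
  define s where "s x = B / n * (\<Sum>k\<in>{1..n}. indicator {x. real k * B / n \<le> \<phi> x} x)" for x
  have s_bounds: "\<phi> x - B / n \<le> s x" "s x \<le> \<phi> x" for x
    unfolding s_def indicator_def mem_Collect_eq by (rule staircase_bounds[OF \<phi>0 \<phi>B n(2,1)])+
  have s_eq: "(\<lambda>x. s x * R x) =
      (\<lambda>x. B / n * (\<Sum>k\<in>{1..n}. indicator {x. real k * B / n \<le> \<phi> x} x * R x))" for R
    unfolding s_def by (auto simp: sum_distrib_right mult.assoc)
  have s_int: "integrable lborel (\<lambda>x. s x * R x)" if "integrable lborel R" for R
  proof -
    have "integrable lborel (\<lambda>x. \<Sum>k\<in>{1..n}. indicator {x. real k * B / n \<le> \<phi> x} x * R x)"
      by (rule Bochner_Integration.integrable_sum) (rule level_int[OF that])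
    then show ?thesis unfolding s_eq by (rule integrable_mult_right)
  qed
  have s_integral: "(\<integral>x. s x * R x \<partial>lborel) =
      B / n * (\<Sum>k\<in>{1..n}. \<integral>x. indicator {x. real k * B / n \<le> \<phi> x} x * R x \<partial>lborel)"
    if "integrable lborel R" for R
    unfolding s_eq integral_mult_right_zero
    by (rule arg_cong[where f="(*) _"], rule Bochner_Integration.integral_sum, rule level_int[OF that])
  have "(\<integral>x. \<phi> x * Q x \<partial>lborel) - B / n * (\<integral>x. Q x \<partial>lborel) = (\<integral>x. (\<phi> x - B / n) * Q x \<partial>lborel)"
    using \<phi>_int[OF Q Q0] Q by (simp add: algebra_simps)
  also have "\<dots> \<le> (\<integral>x. s x * Q x \<partial>lborel)"
  proof (rule integral_mono)
    have "integrable lborel (\<lambda>x. \<phi> x * Q x - B / n * Q x)" using \<phi>_int[OF Q Q0] Q by auto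
    then show "integrable lborel (\<lambda>x. (\<phi> x - B / n) * Q x)" by (simp add: left_diff_distrib)
    show "(\<phi> x - B / n) * Q x \<le> s x * Q x" for x by (rule mult_right_mono[OF s_bounds(1) Q0])
  qed (rule s_int[OF Q])
  also have "\<dots> \<le> (\<integral>x. s x * P x \<partial>lborel)"
    unfolding s_integral[OF Q] s_integral[OF P] using n
    by (intro mult_left_mono sum_mono levels) auto
  also have "\<dots> \<le> (\<integral>x. \<phi> x * P x \<partial>lborel)"
    by (intro integral_mono s_int P \<phi>_int P0 mult_right_mono s_bounds)
  finally show ?thesis by simp
qed

lemma integral_mult_le_if_superlevel_integral_le:
  fixes \<phi> P Q :: "real \<Rightarrow> real"
  assumes "\<phi> \<in> borel_measurable lborel"
    and "integrable lborel P" and "integrable lborel Q"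
    and "\<And>x. 0 \<le> P x" and Q0: "\<And>x. 0 \<le> Q x"
    and \<phi>0: "\<And>x. 0 \<le> \<phi> x" and \<phi>B: "\<And>x. \<phi> x \<le> B"
    and "\<And>c. c > 0 \<Longrightarrow> (\<integral>x. indicator {x. c \<le> \<phi> x} x * Q x \<partial>lborel)
                        \<le> (\<integral>x. indicator {x. c \<le> \<phi> x} x * P x \<partial>lborel)"
  shows "(\<integral>x. \<phi> x * Q x \<partial>lborel) \<le> (\<integral>x. \<phi> x * P x \<partial>lborel)"
proof (cases "B = 0")
  case True
  then have "\<phi> = (\<lambda>x. 0)" using \<phi>0 \<phi>B by (auto intro: order_antisym)
  then show ?thesis by simp
next
  case False
  then have B: "0 < B" using \<phi>0[of 0] \<phi>B[of 0] by simp
  define IQ where "IQ = (\<integral>x. Q x \<partial>lborel)"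
  have IQ: "0 \<le> IQ" unfolding IQ_def using Q0 by simp
  show ?thesis
  proof (rule field_le_epsilon)
    fix e :: real assume "0 < e"
    obtain n :: nat where n: "B * IQ / e < n" using reals_Archimedean2 by blast
    moreover have "0 \<le> B * IQ / e" using B IQ \<open>0 < e\<close> by simp
    ultimately have "0 < n" by linarith
    have "B * IQ < n * e" using n \<open>0 < e\<close> by (simp add: divide_less_eq)
    then have "B / n * IQ \<le> e" using \<open>0 < n\<close> by (simp add: divide_le_eq mult.commute)
    then show "(\<integral>x. \<phi> x * Q x \<partial>lborel) \<le> (\<integral>x. \<phi> x * P x \<partial>lborel) + e"
      using integral_mult_le_add_staircase_error[OF assms(1-7) \<open>0 < n\<close> B assms(8), folded IQ_def]
      by linarith
  qed
qed

lemma set_integral_mult_le_if_superlevel_integral_le: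
  fixes \<phi> p q :: "real \<Rightarrow> real"
  assumes [measurable]: "\<phi> \<in> borel_measurable lborel" "S \<in> sets lborel"
    and \<phi>0: "\<And>x. 0 \<le> \<phi> x" and \<phi>B: "\<And>x. \<phi> x \<le> B"
    and p: "set_integrable lborel S p" and q: "set_integrable lborel S q"
    and p0: "\<And>x. x \<in> S \<Longrightarrow> 0 \<le> p x" and q0: "\<And>x. x \<in> S \<Longrightarrow> 0 \<le> q x"
    and levels: "\<And>c. c > 0 \<Longrightarrow> (LINT x:{x\<in>S. c \<le> \<phi> x}|lborel. q x) \<le> (LINT x:{x\<in>S. c \<le> \<phi> x}|lborel. p x)"
  shows "(LINT x:S|lborel. \<phi> x * q x) \<le> (LINT x:S|lborel. \<phi> x * p x)"
proof -
  have restrict: "(LINT x:{x\<in>S. c \<le> \<phi> x}|lborel. r x) = (\<integral>x. indicator {x. c \<le> \<phi> x} x * (indicator S x * r x) \<partial>lborel)"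
    for c and r :: "real \<Rightarrow> real"
    unfolding set_lebesgue_integral_def by (rule Bochner_Integration.integral_cong) (auto simp: indicator_def)
  have "(\<integral>x. \<phi> x * (indicator S x * q x) \<partial>lborel) \<le> (\<integral>x. \<phi> x * (indicator S x * p x) \<partial>lborel)"
    using p q levels unfolding restrict
    by (intro integral_mult_le_if_superlevel_integral_le[OF _ _ _ _ _ \<phi>0 \<phi>B])
       (auto simp: set_integrable_def indicator_def p0 q0)
  then show ?thesis
    unfolding set_lebesgue_integral_def by (simp add: mult.left_commute)
qed

lemma mono_superlevel_set_unit_interval:
  fixes \<phi> :: "real \<Rightarrow> real"
  assumes "mono \<phi>" and ne: "{x\<in>{0..1}. c \<le> \<phi> x} \<noteq> {}"
  obtains t where "t \<in> {0..1}" "{t<..1} \<subseteq> {x\<in>{0..1}. c \<le> \<phi> x}" "{x\<in>{0..1}. c \<le> \<phi> x} \<subseteq> {t..1}"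
proof
  let ?L = "{x\<in>{0..1}. c \<le> \<phi> x}"
  have bdd: "bdd_below ?L" by (auto intro: bdd_belowI[of _ 0])
  show "Inf ?L \<in> {0..1}" using ne bdd by (auto intro: cInf_greatest cInf_lower2)
  show "{Inf ?L<..1} \<subseteq> ?L"
  proof
    fix y assume y: "y \<in> {Inf ?L<..1}"
    then obtain x where "x \<in> ?L" "x < y" using cInf_less_iff[OF ne bdd] by auto
    then show "y \<in> ?L" using y \<open>mono \<phi>\<close> by (auto dest: monoD[of _ x y])
  qed
  show "?L \<subseteq> {Inf ?L..1}" using bdd by (auto intro: cInf_lower)
qed

lemma antimono_superlevel_set_unit_interval:
  fixes \<phi> :: "real \<Rightarrow> real"
  assumes "antimono \<phi>" and ne: "{x\<in>{0..1}. c \<le> \<phi> x} \<noteq> {}"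
  obtains t where "t \<in> {0..1}" "{0..<t} \<subseteq> {x\<in>{0..1}. c \<le> \<phi> x}" "{x\<in>{0..1}. c \<le> \<phi> x} \<subseteq> {0..t}"
proof
  let ?L = "{x\<in>{0..1}. c \<le> \<phi> x}"
  have bdd: "bdd_above ?L" by (auto intro: bdd_aboveI[of _ 1])
  show "Sup ?L \<in> {0..1}" using ne bdd by (auto intro: cSup_least cSup_upper2)
  show "{0..<Sup ?L} \<subseteq> ?L"
  proof
    fix y assume y: "y \<in> {0..<Sup ?L}"
    then obtain x where "x \<in> ?L" "y < x" using less_cSup_iff[OF ne bdd] by auto
    then show "y \<in> ?L" using y \<open>antimono \<phi>\<close> by (auto dest: antimonoD[of _ y x])
  qed
  show "?L \<subseteq> {0..Sup ?L}" using bdd by (auto intro: cSup_upper)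
qed

lemma set_integral_mono_weight_le_if_upper_tails_le:
  fixes \<phi> p q :: "real \<Rightarrow> real"
  assumes mono: "mono \<phi>" and \<phi>0: "\<And>x. 0 \<le> \<phi> x" and \<phi>B: "\<And>x. \<phi> x \<le> B"
    and p: "set_integrable lborel {0..1} p" and q: "set_integrable lborel {0..1} q"
    and p0: "\<And>x. x \<in> {0..1} \<Longrightarrow> 0 \<le> p x" and q0: "\<And>x. x \<in> {0..1} \<Longrightarrow> 0 \<le> q x"
    and tails: "\<And>t c. t \<in> {0..1} \<Longrightarrow> c > 0 \<Longrightarrow> {t<..1} \<subseteq> {x\<in>{0..1}. c \<le> \<phi> x} \<Longrightarrow>
              (LINT x:{t..1}|lborel. q x) \<le> (LINT x:{t..1}|lborel. p x)"
  shows "(LINT x:{0..1}|lborel. \<phi> x * q x) \<le> (LINT x:{0..1}|lborel. \<phi> x * p x)"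
proof (rule set_integral_mult_le_if_superlevel_integral_le[OF _ _ \<phi>0 \<phi>B p q p0 q0])
  show "\<phi> \<in> borel_measurable lborel" using borel_measurable_mono[OF mono] by simp
  fix c :: real assume "c > 0"
  let ?L = "{x\<in>{0..1}. c \<le> \<phi> x}"
  show "(LINT x:?L|lborel. q x) \<le> (LINT x:?L|lborel. p x)"
  proof (cases "?L = {}")
    case False
    then obtain t where t: "t \<in> {0..1}" "{t<..1} \<subseteq> ?L" "?L \<subseteq> {t..1}"
      using mono_superlevel_set_unit_interval[OF mono] by blast
    have "(LINT x:?L|lborel. r x) = (LINT x:{t..1}|lborel. r x)" for r :: "real \<Rightarrow> real"
      by (rule set_integral_discrete_difference[where X="{t}"])
         (use t in \<open>auto simp: subset_iff order_le_less\<close>)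
    then show ?thesis using tails[OF t(1) \<open>c > 0\<close> t(2)] by simp
  qed (simp add: set_lebesgue_integral_def)
qed simp

lemma set_integral_antimono_weight_le_if_lower_tails_le:
  fixes \<phi> p q :: "real \<Rightarrow> real"
  assumes mono: "antimono \<phi>" and \<phi>0: "\<And>x. 0 \<le> \<phi> x" and \<phi>B: "\<And>x. \<phi> x \<le> B"
    and p: "set_integrable lborel {0..1} p" and q: "set_integrable lborel {0..1} q"
    and p0: "\<And>x. x \<in> {0..1} \<Longrightarrow> 0 \<le> p x" and q0: "\<And>x. x \<in> {0..1} \<Longrightarrow> 0 \<le> q x"
    and tails: "\<And>t c. t \<in> {0..1} \<Longrightarrow> c > 0 \<Longrightarrow> {0..<t} \<subseteq> {x\<in>{0..1}. c \<le> \<phi> x} \<Longrightarrow>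
              (LINT x:{0..t}|lborel. q x) \<le> (LINT x:{0..t}|lborel. p x)"
  shows "(LINT x:{0..1}|lborel. \<phi> x * q x) \<le> (LINT x:{0..1}|lborel. \<phi> x * p x)"
proof (rule set_integral_mult_le_if_superlevel_integral_le[OF _ _ \<phi>0 \<phi>B p q p0 q0])
  have "mono (\<lambda>x. - \<phi> x)" using mono by (auto simp: mono_def antimono_def)
  from borel_measurable_mono[OF this] have "(\<lambda>x. - (- \<phi> x)) \<in> borel_measurable lborel" by simp
  then show "\<phi> \<in> borel_measurable lborel" by simp
  fix c :: real assume "c > 0"
  let ?L = "{x\<in>{0..1}. c \<le> \<phi> x}"
  show "(LINT x:?L|lborel. q x) \<le> (LINT x:?L|lborel. p x)"
  proof (cases "?L = {}")
    case False
    then obtain t where t: "t \<in> {0..1}" "{0..<t} \<subseteq> ?L" "?L \<subseteq> {0..t}"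
      using antimono_superlevel_set_unit_interval[OF mono] by blast
    have "(LINT x:?L|lborel. r x) = (LINT x:{0..t}|lborel. r x)" for r :: "real \<Rightarrow> real"
      by (rule set_integral_discrete_difference[where X="{t}"]) (use t in \<open>auto simp: subset_iff\<close>)
    then show ?thesis using tails[OF t(1) \<open>c > 0\<close> t(2)] by simp
  qed (simp add: set_lebesgue_integral_def)
qed simp

lemma min_factor_mult_le:
  fixes C e k :: real
  assumes C: "C > 1" and e: "0 < e" and k: "k = min (C - 1) 2 * e / 4"
  shows "k * C \<le> (C - 1) * e"
proof (cases "C - 1 \<le> 2")
  case True
  then have "k * C = C * ((C - 1) * e) / 4" using k by simp
  moreover have "C * ((C - 1) * e) \<le> 4 * ((C - 1) * e)" using True C e by (intro mult_right_mono) auto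
  ultimately show ?thesis by linarith
next
  case False
  then have "k * C = C * e / 2" using k by simp
  moreover have "2 * e \<le> C * e" using False e by (intro mult_right_mono) auto
  moreover have "(C - 1) * e = C * e - e" by (simp add: algebra_simps)
  ultimately show ?thesis by linarith
qed

text \<open>Here \<open>s + X\<^sub>i - Y\<^sub>i\<close> is the conditional mean at \<open>w\<^sub>i\<close> of \<open>m\<close> split at level \<open>s\<close>:
  \<open>X\<^sub>i\<close>, \<open>Y\<^sub>i\<close> are the means of the parts above and below \<open>s\<close>, and \<open>b\<close> is \<open>max |m tx1| |m tx2|\<close>.\<close>

lemma mean_separation_arith:
  fixes C e s b k X1 X2 Y1 Y2 :: real
  assumes C: "C > 1" and e: "0 < e" "e \<le> 1/2" and k: "k = min (C - 1) 2 * e / 4"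
    and s: "0 \<le> s" "s \<le> b" and X: "C * X1 \<le> X2" and Y: "C * Y2 \<le> Y1"
    and X2: "(b - s) * e \<le> X2"
  shows "k * b \<le> s + X2 - Y2 \<or> k * b \<le> - (s + X1 - Y1)"
proof (rule ccontr)
  assume "\<not> ?thesis"
  then have h1: "s + X2 - k * b < Y2" and h2: "Y1 - X1 - s < k * b" by auto
  have C0: "C > 0" using C by simp
  have "C * (s + X2 - k * b) < Y1" using mult_strict_left_mono[OF h1 C0] Y by simp
  moreover have "X1 \<le> X2 / C" using X C0 by (simp add: field_simps)
  ultimately have upper: "(C - 1) * s + (C - 1 / C) * X2 - C * k * b < k * b"
    using h2 by (simp add: algebra_simps)
  have CC: "C - 1 / C > 0" using C less_1_mult[OF C C] by (simp add: field_simps)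
  have "(C - 1 / C) * e = (C - 1) * ((C + 1) * e / C)" using C0 by (simp add: field_simps)
  also have "\<dots> \<le> C - 1"
  proof -
    have "(C + 1) * e \<le> (C + 1) / 2" using C e mult_left_mono[of e "1/2" "C + 1"] by simp
    then have "(C + 1) * e / C \<le> 1" using C by (simp add: field_simps)
    then show ?thesis using C mult_left_le[of "(C + 1) * e / C" "C - 1"] by simp
  qed
  finally have "(C - 1 / C) * e * s \<le> (C - 1) * s" using s by (simp add: mult_right_mono)
  moreover have "(C - 1 / C) * ((b - s) * e) \<le> (C - 1 / C) * X2" using X2 CC by (simp add: mult_left_mono)
  ultimately have lower: "(C - 1 / C) * e * b - C * k * b \<le> (C - 1) * s + (C - 1 / C) * X2 - C * k * b"
    by (simp add: algebra_simps)
  have "k * C \<le> (C - 1) * e" using min_factor_mult_le[OF C e(1) k] .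
  then have "(C + 1) * (k * C) \<le> (C + 1) * ((C - 1) * e)" using C by (intro mult_left_mono) auto
  also have "\<dots> = ((C - 1 / C) * e) * C" using C0 by (simp add: field_simps)
  finally have "(C + 1) * k \<le> (C - 1 / C) * e" using C0 by (simp add: ac_simps)
  then have "(C + 1) * k * b \<le> (C - 1 / C) * e * b" using s by (intro mult_right_mono) auto
  with upper lower show False by (simp add: algebra_simps)
qed

lemma set_integral_square_ge_on_subinterval:
  fixes T :: "real \<Rightarrow> real"
  assumes T: "set_integrable lborel {0..1} (\<lambda>w. (T w)\<^sup>2)"
    and ab: "0 \<le> a" "a \<le> b" "b \<le> 1"
    and c: "\<And>w. w \<in> {a<..<b} \<Longrightarrow> c \<le> (T w)\<^sup>2"
  shows "c * (b - a) \<le> (LINT w:{0..1}|lborel. (T w)\<^sup>2)"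
proof -
  have restrict: "(\<lambda>x. indicator {0..1} x *\<^sub>R indicator {a<..<b} x) = (indicator {a<..<b} :: real \<Rightarrow> real)"
    using ab by (auto simp: indicator_def fun_eq_iff)
  have ind: "set_integrable lborel {0..1} (\<lambda>x. indicator {a<..<b} x :: real)"
    unfolding set_integrable_def restrict using ab by (intro integrable_real_indicator) auto
  have "(LINT w:{0..1}|lborel. indicator {a<..<b} w) = b - a"
    unfolding set_lebesgue_integral_def restrict using ab by simp
  then have "c * (b - a) = (LINT w:{0..1}|lborel. c * indicator {a<..<b} w)"
    by (simp add: set_integral_mult_right)
  also have "\<dots> \<le> (LINT w:{0..1}|lborel. (T w)\<^sup>2)"
  proof (rule set_integral_mono)
    show "set_integrable lborel {0..1} (\<lambda>w. c * indicator {a<..<b} w)"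
      using ind by (rule set_integrable_mult_right)
    show "c * indicator {a<..<b} w \<le> (T w)\<^sup>2" if "w \<in> {0..1}" for w
      using c[of w] by (cases "w \<in> {a<..<b}") auto
  qed (rule T)
  finally show ?thesis .
qed

lemma norm2t_le_of_mono:
  fixes m :: "real \<Rightarrow> real"
  assumes "mono m" "a \<le> b"
  shows "norm2t a b m \<le> sqrt (b - a) * max \<bar>m a\<bar> \<bar>m b\<bar>"
proof -
  define M where "M = max \<bar>m a\<bar> \<bar>m b\<bar>"
  have bound: "(m x)\<^sup>2 \<le> M\<^sup>2" if "x \<in> {a..b}" for x
  proof -
    have "m a \<le> m x" "m x \<le> m b" using that by (auto intro: monoD[OF assms(1)])
    then have "\<bar>m x\<bar> \<le> M" unfolding M_def by linarith
    then show ?thesis by (metis abs_ge_zero power2_abs power_mono)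
  qed
  have "(LINT x:{a..b}|lborel. (m x)\<^sup>2) \<le> (LINT x:{a..b}|lborel. M\<^sup>2)"
    unfolding set_lebesgue_integral_def
  proof (rule integral_mono')
    show "integrable lborel (\<lambda>x. indicator {a..b} x *\<^sub>R M\<^sup>2)"
      using integrable_real_indicator[of "{a..b}" lborel] by (auto simp: emeasure_lborel_Icc_eq)
    show "indicator {a..b} x *\<^sub>R (m x)\<^sup>2 \<le> indicator {a..b} x *\<^sub>R M\<^sup>2" for x
      using bound[of x] by (auto simp: indicator_def)
  qed simp
  also have "\<dots> = M\<^sup>2 * (b - a)"
    using set_integral_const[of "{a..b}" lborel "M\<^sup>2"] assms(2) by (simp add: emeasure_lborel_Icc_eq)
  finally have "norm2t a b m \<le> sqrt (M\<^sup>2 * (b - a))"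
    unfolding norm2t_def by (rule real_sqrt_le_mono)
  also have "\<dots> = sqrt (b - a) * M" unfolding M_def by (simp add: real_sqrt_mult)
  finally show ?thesis unfolding M_def .
qed

lemma mono_extension_of_mono_on_unit_interval:
  fixes m :: "real \<Rightarrow> real"
  assumes "mono_on {0..1} m"
  obtains m' where "mono m'" "\<And>x. \<bar>m' x\<bar> \<le> \<bar>m 0\<bar> + \<bar>m 1\<bar>" "\<And>x. x \<in> {0..1} \<Longrightarrow> m' x = m x"
proof
  define cl where "cl x = max 0 (min 1 x)" for x :: real
  have cl: "cl x \<in> {0..1}" "x \<le> y \<Longrightarrow> cl x \<le> cl y" for x y unfolding cl_def by auto
  show "mono (\<lambda>x. m (cl x))" by (intro monoI mono_onD[OF assms] cl)
  show "\<bar>m (cl x)\<bar> \<le> \<bar>m 0\<bar> + \<bar>m 1\<bar>" for x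
    using mono_onD[OF assms, of 0 "cl x"] mono_onD[OF assms, of "cl x" 1] cl(1)[of x] by auto
  show "m (cl x) = m x" if "x \<in> {0..1}" for x using that unfolding cl_def by simp
qed

lemma L2_measurable: "L2 h \<Longrightarrow> h \<in> borel_measurable lborel"
  unfolding L2_def by simp

lemma L2_square_integrable_on:
  assumes "L2 h" "S \<in> sets lborel" "S \<subseteq> {0..1}"
  shows "set_integrable lborel S (\<lambda>x. (h x)\<^sup>2)"
  using assms set_integrable_subset unfolding L2_def by blast

lemma norm2t_add_le:
  assumes "L2 u" "L2 v" "0 \<le> a" "b \<le> 1"
  shows "norm2t a b (\<lambda>x. u x + v x) \<le> norm2t a b u + norm2t a b v"
  unfolding norm2t_def using assms
  by (intro set_integral_Minkowski L2_measurable L2_square_integrable_on) auto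

lemma L2_add: "L2 a \<Longrightarrow> L2 b \<Longrightarrow> L2 (\<lambda>x. a x + b x)"
proof -
  assume a: "L2 a" and b: "L2 b"
  have [measurable]: "a \<in> borel_measurable lborel" "b \<in> borel_measurable lborel"
    using a b by (auto simp: L2_def)
  have a2: "set_integrable lborel {0..1} (\<lambda>x. (a x)\<^sup>2)" and b2: "set_integrable lborel {0..1} (\<lambda>x. (b x)\<^sup>2)"
    using a b by (auto simp: L2_def)
  have "set_integrable lborel {0..1} (\<lambda>x. a x * b x)"
    by (rule set_integrable_mult_if_square_integrable[OF _ _ _ a2 b2]) auto
  then have "set_integrable lborel {0..1} (\<lambda>x. (a x)\<^sup>2 + 2 * (a x * b x) + (b x)\<^sup>2)"
    using a2 b2 by auto
  then show ?thesis unfolding L2_def by (simp add: power2_eq_square algebra_simps)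
qed

lemma L2_uminus: "L2 a \<Longrightarrow> L2 (\<lambda>x. - a x)"
  unfolding L2_def by simp

lemma L2_diff: "L2 a \<Longrightarrow> L2 b \<Longrightarrow> L2 (\<lambda>x. a x - b x)"
  using L2_add[OF _ L2_uminus] by simp

lemma L2_of_bounded:
  fixes h :: "real \<Rightarrow> real"
  assumes [measurable]: "h \<in> borel_measurable lborel" and bound: "\<And>x. \<bar>h x\<bar> \<le> K"
  shows "L2 h"
proof -
  have sq: "(h x)\<^sup>2 \<le> K\<^sup>2" for x
    using power_mono[OF bound[of x] abs_ge_zero, of 2] by simp
  have "set_integrable lborel {0..1::real} (\<lambda>_. K\<^sup>2)"
    unfolding set_integrable_def by (intro integrable_scaleR_left integrable_real_indicator) auto
  then have "set_integrable lborel {0..1} (\<lambda>x. (h x)\<^sup>2)"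
    by (rule set_integrable_bound) (use sq in \<open>auto simp: set_borel_measurable_def\<close>)
  then show ?thesis unfolding L2_def by simp
qed

locale square_integrable_kernel =
  fixes f :: "real \<Rightarrow> real \<Rightarrow> real"
  assumes kernel_measurable[measurable]: "(\<lambda>(x, w). f x w) \<in> borel_measurable (lborel \<Otimes>\<^sub>M lborel)"
    and kernel_square_integrable:
      "set_integrable (lborel \<Otimes>\<^sub>M lborel) ({0..1} \<times> {0..1}) (\<lambda>(x, w). (f x w)\<^sup>2)"
begin

lemma kernel_section_measurable[measurable]: "(\<lambda>x. f x w) \<in> borel_measurable lborel"
  using measurable_compose[OF measurable_Pair2'[of w] kernel_measurable] by simp

definition section_square_integral :: "real \<Rightarrow> real" where
  "section_square_integral w = (LINT x:{0..1}|lborel. (f x w)\<^sup>2)"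

lemma kernel_sections_square_integrable:
  "AE w in lborel. w \<in> {0..1} \<longrightarrow> set_integrable lborel {0..1} (\<lambda>x. (f x w)\<^sup>2)"
  and section_square_integral_integrable:
  "integrable lborel (\<lambda>w. indicator {0..1} w * section_square_integral w)"
  and integral_section_square_integral:
  "(\<integral>w. indicator {0..1} w * section_square_integral w \<partial>lborel)
     = (LINT p:({0..1} \<times> {0..1})|(lborel \<Otimes>\<^sub>M lborel). (\<lambda>(x, w). (f x w)\<^sup>2) p)"
proof -
  define g where "g x w = indicator ({0..1} \<times> {0..1}) (x, w) * (f x w)\<^sup>2" for x w :: real
  have g_int: "integrable (lborel \<Otimes>\<^sub>M lborel) (\<lambda>(x, w). g x w)"
    using kernel_square_integrable
    unfolding set_integrable_def g_def by (simp add: case_prod_beta' mult.commute)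
  have g_section: "(\<lambda>x. g x w) = (\<lambda>x. indicator {0..1} w * (indicator {0..1} x *\<^sub>R (f x w)\<^sup>2))" for w
    unfolding g_def by (auto simp: fun_eq_iff indicator_def)
  have section_eq: "(\<integral>x. g x w \<partial>lborel) = indicator {0..1} w * section_square_integral w" for w
    unfolding g_section section_square_integral_def set_lebesgue_integral_def by simp
  show "AE w in lborel. w \<in> {0..1} \<longrightarrow> set_integrable lborel {0..1} (\<lambda>x. (f x w)\<^sup>2)"
    using lborel_pair.AE_integrable_snd[OF g_int]
    by eventually_elim (auto simp: g_section set_integrable_def)
  show "integrable lborel (\<lambda>w. indicator {0..1} w * section_square_integral w)"
    using lborel_pair.integrable_snd[OF g_int] unfolding section_eq .
  show "(\<integral>w. indicator {0..1} w * section_square_integral w \<partial>lborel)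
     = (LINT p:({0..1} \<times> {0..1})|(lborel \<Otimes>\<^sub>M lborel). (\<lambda>(x, w). (f x w)\<^sup>2) p)"
  proof -
    have "integral\<^sup>L (lborel \<Otimes>\<^sub>M lborel) (\<lambda>(x, w). g x w)
        = (LINT p:({0..1} \<times> {0..1})|(lborel \<Otimes>\<^sub>M lborel). (\<lambda>(x, w). (f x w)\<^sup>2) p)"
      unfolding set_lebesgue_integral_def g_def by (simp add: case_prod_beta' mult.commute)
    then show ?thesis using lborel_pair.integral_snd[OF g_int] unfolding section_eq by simp
  qed
qed

lemma Top_measurable[measurable]:
  assumes "L2 h"
  shows "Top f h \<in> borel_measurable lborel"
proof -
  have [measurable]: "h \<in> borel_measurable lborel" using assms by (rule L2_measurable)
  have "(\<lambda>w. \<integral>x. indicator {0..1} x *\<^sub>R (h x * f x w) \<partial>lborel) \<in> borel_measurable lborel"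
    by measurable
  then show ?thesis unfolding Top_def[abs_def] set_lebesgue_integral_def .
qed

lemma Top_square_le:
  assumes "L2 h"
  shows "AE w in lborel. indicator {0..1} w * (Top f h w)\<^sup>2
           \<le> (LINT x:{0..1}|lborel. (h x)\<^sup>2) * (indicator {0..1} w * section_square_integral w)"
  using kernel_sections_square_integrable
proof eventually_elim
  case (elim w)
  show ?case
  proof (cases "w \<in> {0..1}")
    case True
    have "(Top f h w)\<^sup>2 \<le> (LINT x:{0..1}|lborel. (h x)\<^sup>2) * section_square_integral w"
      unfolding Top_def section_square_integral_def using assms elim True
      by (intro set_integral_Cauchy_Schwarz) (auto simp: L2_def)
    then show ?thesis using True by simp
  qed simp
qed

lemma Top_square_integrable:
  assumes "L2 h"
  shows "set_integrable lborel {0..1} (\<lambda>w. (Top f h w)\<^sup>2)"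
  unfolding set_integrable_def
proof (rule Bochner_Integration.integrable_bound[OF
      integrable_mult_right[OF section_square_integral_integrable]])
  show "(\<lambda>w. indicator {0..1} w *\<^sub>R (Top f h w)\<^sup>2) \<in> borel_measurable lborel"
    using assms by measurable
  have h0: "0 \<le> (LINT x:{0..1}|lborel. (h x)\<^sup>2)" by (rule set_integral_nonneg) simp
  have F0: "0 \<le> section_square_integral w" for w
    unfolding section_square_integral_def by (rule set_integral_nonneg) simp
  show "AE w in lborel. norm (indicator {0..1} w *\<^sub>R (Top f h w)\<^sup>2)
      \<le> norm ((LINT x:{0..1}|lborel. (h x)\<^sup>2) * (indicator {0..1} w * section_square_integral w))"
    using Top_square_le[OF assms]
    by (rule eventually_mono) (use h0 F0 in \<open>auto simp: indicator_def\<close>)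
qed

lemma norm2_Top_le_Hilbert_Schmidt:
  assumes "L2 h"
  shows "norm2 (Top f h)
           \<le> sqrt (LINT p:({0..1} \<times> {0..1})|(lborel \<Otimes>\<^sub>M lborel). (\<lambda>(x, w). (f x w)\<^sup>2) p) * norm2 h"
proof -
  have "(LINT w:{0..1}|lborel. (Top f h w)\<^sup>2)
      \<le> (\<integral>w. (LINT x:{0..1}|lborel. (h x)\<^sup>2) * (indicator {0..1} w * section_square_integral w) \<partial>lborel)"
    unfolding set_lebesgue_integral_def[of _ "{0..1}" "\<lambda>w. (Top f h w)\<^sup>2"]
  proof (rule integral_mono_AE)
    show "integrable lborel (\<lambda>w. indicator {0..1} w *\<^sub>R (Top f h w)\<^sup>2)"
      using Top_square_integrable[OF assms] by (simp add: set_integrable_def)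
    show "integrable lborel (\<lambda>w. (LINT x:{0..1}|lborel. (h x)\<^sup>2) * (indicator {0..1} w * section_square_integral w))"
      by (intro integrable_mult_right section_square_integral_integrable)
    show "AE w in lborel. indicator {0..1} w *\<^sub>R (Top f h w)\<^sup>2
        \<le> (LINT x:{0..1}|lborel. (h x)\<^sup>2) * (indicator {0..1} w * section_square_integral w)"
      using Top_square_le[OF assms] by simp
  qed
  also have "\<dots> = (LINT x:{0..1}|lborel. (h x)\<^sup>2)
      * (LINT p:({0..1} \<times> {0..1})|(lborel \<Otimes>\<^sub>M lborel). (\<lambda>(x, w). (f x w)\<^sup>2) p)"
    by (simp add: integral_section_square_integral)
  finally show ?thesis
    unfolding norm2_def using real_sqrt_le_mono by (fastforce simp: real_sqrt_mult mult.commute)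
qed

lemma Top_add:
  assumes "L2 a" "L2 b"
  shows "AE w in lborel. w \<in> {0..1} \<longrightarrow> Top f (\<lambda>x. a x + b x) w = Top f a w + Top f b w"
  using kernel_sections_square_integrable
proof eventually_elim
  case (elim w)
  have "set_integrable lborel {0..1} (\<lambda>x. c x * f x w)" if "L2 c" "w \<in> {0..1}" for c
    using that elim
    by (intro set_integrable_mult_if_square_integrable) (auto simp: L2_def)
  then show ?case
    using assms unfolding Top_def by (auto simp: distrib_right)
qed

lemma Top_uminus: "Top f (\<lambda>x. - a x) = (\<lambda>w. - Top f a w)"
  unfolding Top_def set_lebesgue_integral_def by (simp add: fun_eq_iff)

lemma norm2_Top_add_le:
  assumes a: "L2 a" and b: "L2 b"
  shows "norm2 (Top f (\<lambda>x. a x + b x)) \<le> norm2 (Top f a) + norm2 (Top f b)"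
proof -
  have [measurable]: "Top f a \<in> borel_measurable lborel" "Top f b \<in> borel_measurable lborel"
    using a b by measurable
  have "(LINT w:{0..1}|lborel. (Top f (\<lambda>x. a x + b x) w)\<^sup>2)
      = (LINT w:{0..1}|lborel. (Top f a w + Top f b w)\<^sup>2)"
    by (rule set_lebesgue_integral_cong_AE) (use Top_add[OF a b] L2_add[OF a b] in auto)
  also have "sqrt \<dots> \<le> norm2 (Top f a) + norm2 (Top f b)"
    unfolding norm2_def
    by (rule set_integral_Minkowski) (use Top_square_integrable[OF a] Top_square_integrable[OF b] in auto)
  finally show ?thesis unfolding norm2_def .
qed

lemma norm2_Top_le_opnorm:
  assumes h: "L2 h"
  shows "norm2 (Top f h) \<le> opnorm f * norm2 h"
proof -
  define S where "S = {norm2 (Top f h) | h. L2 h \<and> norm2 h = 1}"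
  have bdd: "bdd_above S"
    unfolding S_def using norm2_Top_le_Hilbert_Schmidt by (fastforce intro: bdd_aboveI)
  have h2: "(LINT x:{0..1}|lborel. (h x)\<^sup>2) = (norm2 h)\<^sup>2"
    unfolding norm2_def by (simp add: set_integral_nonneg)
  show ?thesis
  proof (cases "norm2 h = 0")
    case True
    then show ?thesis using norm2_Top_le_Hilbert_Schmidt[OF h] by simp
  next
    case False
    define n where "n = norm2 h"
    have "0 \<le> norm2 h" unfolding norm2_def by (simp add: set_integral_nonneg)
    then have n: "n > 0" using False unfolding n_def by simp
    have [measurable]: "h \<in> borel_measurable lborel" using h by (rule L2_measurable)
    have "L2 (\<lambda>x. h x / n)"
      using h unfolding L2_def by (simp add: power_divide set_integrable_divide)
    moreover have "norm2 (\<lambda>x. h x / n) = 1"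
      using n h2 unfolding norm2_def n_def by (simp add: power_divide)
    ultimately have "norm2 (Top f (\<lambda>x. h x / n)) \<le> Sup S"
      using bdd unfolding S_def by (blast intro: cSup_upper)
    moreover have "Top f (\<lambda>x. h x / n) = (\<lambda>w. Top f h w / n)"
      unfolding Top_def by (simp add: fun_eq_iff)
    moreover have "norm2 (\<lambda>w. Top f h w / n) = norm2 (Top f h) / n"
      unfolding norm2_def using n by (simp add: power_divide real_sqrt_divide)
    ultimately show ?thesis
      using n unfolding opnorm_def S_def[symmetric] n_def by (simp add: field_simps)
  qed
qed

end

locale monotone_instrument = square_integrable_kernel f
  for f :: "real \<Rightarrow> real \<Rightarrow> real" +
  fixes x1 tx1 tx2 x2 w1 w2 C_F c_f c_W :: real
  assumes x_order: "0 \<le> x1" "x1 < tx1" "tx1 < tx2" "tx2 < x2" "x2 \<le> 1"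
    and w_order: "0 < w1" "w1 < w2" "w2 < 1"
    and kernel_nonneg: "\<And>x w. x \<in> {0..1} \<Longrightarrow> w \<in> {0..1} \<Longrightarrow> 0 \<le> f x w"
    and FXgW_antimono: "\<And>x w' w''. x \<in> {0<..<1} \<Longrightarrow> w' \<in> {0<..<1} \<Longrightarrow> w'' \<in> {0<..<1} \<Longrightarrow>
                 w' \<le> w'' \<Longrightarrow> FXgW f x w' \<ge> FXgW f x w''"
    and C_F: "C_F > 1"
    and FXgW_ratio_lower: "\<And>x. x \<in> {0<..<x2} \<Longrightarrow> FXgW f x w1 \<ge> C_F * FXgW f x w2"
    and FXgW_ratio_upper: "\<And>x. x \<in> {x1<..<1} \<Longrightarrow> C_F * (1 - FXgW f x w1) \<le> 1 - FXgW f x w2"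
    and c_f: "c_f > 0" and fXgW_ge: "\<And>x w. x \<in> {x1..x2} \<Longrightarrow> w \<in> {w1, w2} \<Longrightarrow> fXgW f x w \<ge> c_f"
    and c_W: "0 < c_W" and fW_ge: "\<And>w. w \<in> {0..1} \<Longrightarrow> c_W \<le> fW f w"
begin

lemma w_unit: "w1 \<in> {0..1}" "w2 \<in> {0..1}"
  using w_order by auto

lemma fW_pos: "w \<in> {0..1} \<Longrightarrow> 0 < fW f w"
  using fW_ge c_W by fastforce

text \<open>A non-integrable section would have marginal density \<open>0\<close>.\<close>

lemma kernel_section_integrable:
  assumes "w \<in> {0..1}"
  shows "set_integrable lborel {0..1} (\<lambda>x. f x w)"
proof (rule ccontr)
  assume "\<not> ?thesis"
  then have "fW f w = 0"
    unfolding fW_def set_lebesgue_integral_def set_integrable_def by (rule not_integrable_integral_eq)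
  then show False using fW_pos[OF assms] by simp
qed

lemma fXgW_measurable[measurable]: "(\<lambda>x. fXgW f x w) \<in> borel_measurable lborel"
  unfolding fXgW_def by measurable

lemma fXgW_nonneg: "x \<in> {0..1} \<Longrightarrow> w \<in> {0..1} \<Longrightarrow> 0 \<le> fXgW f x w"
  unfolding fXgW_def using kernel_nonneg fW_pos by (simp add: less_imp_le)

lemma fXgW_integrable: "w \<in> {0..1} \<Longrightarrow> set_integrable lborel {0..1} (\<lambda>x. fXgW f x w)"
  unfolding fXgW_def using kernel_section_integrable by (auto intro: set_integrable_divide)

lemma integral_fXgW: "w \<in> {0..1} \<Longrightarrow> (LINT x:{0..1}|lborel. fXgW f x w) = 1"
  unfolding fXgW_def using fW_pos[of w] by (simp add: fW_def[symmetric])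

lemma FXgW_eq_integral: "FXgW f t w = (LINT x:{0..t}|lborel. fXgW f x w)"
  unfolding fXgW_def FXgW_def by simp

lemma FXgW_0: "FXgW f 0 w = 0"
proof -
  have "(LINT x:{0..0}|lborel. fXgW f x w) = (LINT x:{}|lborel. fXgW f x w)"
    by (rule set_integral_discrete_difference[where X="{0}"]) auto
  then show ?thesis unfolding FXgW_eq_integral by (simp add: set_lebesgue_integral_def)
qed

lemma FXgW_1: "w \<in> {0..1} \<Longrightarrow> FXgW f 1 w = 1"
  unfolding FXgW_eq_integral using integral_fXgW by simp

lemma integral_upper_tail_fXgW:
  assumes t: "t \<in> {0..1}" and w: "w \<in> {0..1}"
  shows "(LINT x:{t..1}|lborel. fXgW f x w) = 1 - FXgW f t w"
proof -
  have "1 = (LINT x:{0..t} \<union> {t<..1}|lborel. fXgW f x w)"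
    using integral_fXgW[OF w] t by (simp add: ivl_disj_un)
  also have "\<dots> = (LINT x:{0..t}|lborel. fXgW f x w) + (LINT x:{t<..1}|lborel. fXgW f x w)"
    using t fXgW_integrable[OF w] by (intro set_integral_Un) (auto intro: set_integrable_subset)
  also have "(LINT x:{t<..1}|lborel. fXgW f x w) = (LINT x:{t..1}|lborel. fXgW f x w)"
    by (rule set_integral_discrete_difference[where X="{t}"]) auto
  finally show ?thesis unfolding FXgW_eq_integral by simp
qed

definition cond_mean :: "real \<Rightarrow> (real \<Rightarrow> real) \<Rightarrow> real" where
  "cond_mean w \<phi> = (LINT x:{0..1}|lborel. \<phi> x * fXgW f x w)"

lemma cond_mean_integrable:
  assumes [measurable]: "\<phi> \<in> borel_measurable lborel" and K: "\<And>x. \<bar>\<phi> x\<bar> \<le> K" and w: "w \<in> {0..1}"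
  shows "set_integrable lborel {0..1} (\<lambda>x. \<phi> x * fXgW f x w)"
proof (rule set_integrable_bound[OF set_integrable_mult_right[OF fXgW_integrable[OF w], of K]])
  show "set_borel_measurable lborel {0..1} (\<lambda>x. \<phi> x * fXgW f x w)"
    unfolding set_borel_measurable_def by measurable
  have "\<bar>\<phi> x\<bar> * fXgW f x w \<le> \<bar>K\<bar> * fXgW f x w" if "x \<in> {0..1}" for x
    using K[of x] fXgW_nonneg[OF that w] by (intro mult_right_mono) auto
  then show "AE x in lborel. x \<in> {0..1} \<longrightarrow> norm (\<phi> x * fXgW f x w) \<le> norm (K * fXgW f x w)"
    using fXgW_nonneg w by (auto simp: abs_mult)
qed

lemma cond_mean_diff:
  assumes "\<phi> \<in> borel_measurable lborel" "\<psi> \<in> borel_measurable lborel"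
    and "\<And>x. \<bar>\<phi> x\<bar> \<le> K" "\<And>x. \<bar>\<psi> x\<bar> \<le> K" and "w \<in> {0..1}"
  shows "cond_mean w (\<lambda>x. \<phi> x - \<psi> x) = cond_mean w \<phi> - cond_mean w \<psi>"
  using cond_mean_integrable[OF assms(1,3,5)] cond_mean_integrable[OF assms(2,4,5)]
  unfolding cond_mean_def by (simp add: left_diff_distrib set_integral_diff)

lemma cond_mean_add_const:
  assumes "\<phi> \<in> borel_measurable lborel" "\<And>x. \<bar>\<phi> x\<bar> \<le> K" "w \<in> {0..1}"
  shows "cond_mean w (\<lambda>x. \<phi> x + c) = cond_mean w \<phi> + c"
  using cond_mean_integrable[OF assms] cond_mean_integrable[of "\<lambda>_. c" "\<bar>c\<bar>" w] assms(3)
  unfolding cond_mean_def by (simp add: distrib_right set_integral_mult_right integral_fXgW)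

lemma Top_eq_cond_mean: "w \<in> {0..1} \<Longrightarrow> Top f \<phi> w = cond_mean w \<phi> * fW f w"
  unfolding Top_def cond_mean_def fXgW_def using fW_pos[of w] by (simp add: set_integral_divide_zero)

lemma cond_mean_mono_in_w:
  assumes m: "mono m" and K: "\<And>x. \<bar>m x\<bar> \<le> K"
    and w: "w' \<in> {0<..<1}" "w'' \<in> {0<..<1}" "w' \<le> w''"
  shows "cond_mean w' m \<le> cond_mean w'' m"
proof -
  have w01: "w' \<in> {0..1}" "w'' \<in> {0..1}" using w by auto
  have [measurable]: "m \<in> borel_measurable lborel" using borel_measurable_mono[OF m] by simp
  have "(LINT x:{0..1}|lborel. (m x + K) * fXgW f x w') \<le> (LINT x:{0..1}|lborel. (m x + K) * fXgW f x w'')"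
  proof (rule set_integral_mono_weight_le_if_upper_tails_le[where B="2 * K"])
    show "mono (\<lambda>x. m x + K)" using m by (auto simp: mono_def)
    show "0 \<le> m x + K" "m x + K \<le> 2 * K" for x using K[of x] by auto
    fix t :: real assume t: "t \<in> {0..1}"
    have "1 - FXgW f t w' \<le> 1 - FXgW f t w''"
      using FXgW_antimono[of t w' w''] w t FXgW_0 FXgW_1 w01 by (cases "t = 0 \<or> t = 1") auto
    then show "(LINT x:{t..1}|lborel. fXgW f x w') \<le> (LINT x:{t..1}|lborel. fXgW f x w'')"
      unfolding integral_upper_tail_fXgW[OF t w01(1)] integral_upper_tail_fXgW[OF t w01(2)] .
  qed (use fXgW_integrable fXgW_nonneg w01 in auto)
  then show ?thesis
    using cond_mean_add_const[OF _ K] w01 unfolding cond_mean_def by simp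
qed

lemma cond_mean_upper_dominance:
  assumes m: "mono \<phi>" and \<phi>0: "\<And>x. 0 \<le> \<phi> x" and \<phi>B: "\<And>x. \<phi> x \<le> B"
    and vanish: "\<And>x. x \<le> tx1 \<Longrightarrow> \<phi> x = 0"
  shows "C_F * cond_mean w1 \<phi> \<le> cond_mean w2 \<phi>"
proof -
  have "(LINT x:{0..1}|lborel. \<phi> x * (C_F * fXgW f x w1)) \<le> (LINT x:{0..1}|lborel. \<phi> x * fXgW f x w2)"
  proof (rule set_integral_mono_weight_le_if_upper_tails_le[OF m \<phi>0 \<phi>B])
    fix t c :: real assume t: "t \<in> {0..1}" and "c > 0" and sub: "{t<..1} \<subseteq> {x\<in>{0..1}. c \<le> \<phi> x}"
    have "tx1 \<le> t"
    proof (rule ccontr)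
      assume "\<not> tx1 \<le> t"
      then have "(t + tx1) / 2 \<in> {t<..1}" and "\<phi> ((t + tx1) / 2) = 0" using x_order vanish by auto
      then show False using subsetD[OF sub] \<open>c > 0\<close> by fastforce
    qed
    then have "C_F * (1 - FXgW f t w1) \<le> 1 - FXgW f t w2"
      using FXgW_ratio_upper[of t] t x_order FXgW_1 w_unit by (cases "t = 1") auto
    then show "(LINT x:{t..1}|lborel. C_F * fXgW f x w1) \<le> (LINT x:{t..1}|lborel. fXgW f x w2)"
      using integral_upper_tail_fXgW[OF t w_unit(1)] integral_upper_tail_fXgW[OF t w_unit(2)] by simp
  qed (use fXgW_integrable fXgW_nonneg w_unit C_F in auto)
  then show ?thesis unfolding cond_mean_def by (simp add: mult.left_commute)
qed

lemma cond_mean_lower_dominance: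
  assumes m: "antimono \<phi>" and \<phi>0: "\<And>x. 0 \<le> \<phi> x" and \<phi>B: "\<And>x. \<phi> x \<le> B"
    and vanish: "\<And>x. tx2 \<le> x \<Longrightarrow> \<phi> x = 0"
  shows "C_F * cond_mean w2 \<phi> \<le> cond_mean w1 \<phi>"
proof -
  have "(LINT x:{0..1}|lborel. \<phi> x * (C_F * fXgW f x w2)) \<le> (LINT x:{0..1}|lborel. \<phi> x * fXgW f x w1)"
  proof (rule set_integral_antimono_weight_le_if_lower_tails_le[OF m \<phi>0 \<phi>B])
    fix t c :: real assume t: "t \<in> {0..1}" and "c > 0" and sub: "{0..<t} \<subseteq> {x\<in>{0..1}. c \<le> \<phi> x}"
    have "t \<le> tx2"
    proof (rule ccontr)
      assume "\<not> t \<le> tx2"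
      then have "(t + tx2) / 2 \<in> {0..<t}" and "\<phi> ((t + tx2) / 2) = 0" using x_order vanish by auto
      then show False using subsetD[OF sub] \<open>c > 0\<close> by fastforce
    qed
    then have "C_F * FXgW f t w2 \<le> FXgW f t w1"
      using FXgW_ratio_lower[of t] t x_order FXgW_0 by (cases "t = 0") auto
    then show "(LINT x:{0..t}|lborel. C_F * fXgW f x w2) \<le> (LINT x:{0..t}|lborel. fXgW f x w1)"
      unfolding FXgW_eq_integral by simp
  qed (use fXgW_integrable fXgW_nonneg w_unit C_F in auto)
  then show ?thesis unfolding cond_mean_def by (simp add: mult.left_commute)
qed

lemma cond_mean_ge:
  assumes w: "w \<in> {w1, w2}" and ab: "x1 \<le> a" "a \<le> b" "b \<le> x2"
    and [measurable]: "\<phi> \<in> borel_measurable lborel" and K: "\<And>x. \<bar>\<phi> x\<bar> \<le> K"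
    and \<phi>0: "\<And>x. x \<in> {0..1} \<Longrightarrow> 0 \<le> \<phi> x" and v: "0 \<le> v" "\<And>x. x \<in> {a..b} \<Longrightarrow> v \<le> \<phi> x"
  shows "v * c_f * (b - a) \<le> cond_mean w \<phi>"
proof -
  have w01: "w \<in> {0..1}" using w w_unit by auto
  have restrict: "(\<lambda>x. indicator {0..1} x *\<^sub>R indicator {a..b} x) = (indicator {a..b} :: real \<Rightarrow> real)"
    using ab x_order by (auto simp: indicator_def fun_eq_iff)
  have ind: "set_integrable lborel {0..1} (\<lambda>x. indicator {a..b} x :: real)"
    unfolding set_integrable_def restrict using ab by (intro integrable_real_indicator) auto
  have "(LINT x:{0..1}|lborel. indicator {a..b} x) = b - a"
    unfolding set_lebesgue_integral_def restrict using ab by simp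
  then have "v * c_f * (b - a) = (LINT x:{0..1}|lborel. v * c_f * indicator {a..b} x)"
    by (simp add: set_integral_mult_right)
  also have "\<dots> \<le> cond_mean w \<phi>"
    unfolding cond_mean_def
  proof (rule set_integral_mono)
    show "set_integrable lborel {0..1} (\<lambda>x. v * c_f * indicator {a..b} x)"
      using ind by (rule set_integrable_mult_right)
    show "set_integrable lborel {0..1} (\<lambda>x. \<phi> x * fXgW f x w)"
      by (rule cond_mean_integrable[OF _ K w01]) simp
    fix x :: real assume x: "x \<in> {0..1}"
    show "v * c_f * indicator {a..b} x \<le> \<phi> x * fXgW f x w"
    proof (cases "x \<in> {a..b}")
      case True
      then have "c_f \<le> fXgW f x w" using fXgW_ge[OF _ w] ab by auto
      moreover have "v \<le> \<phi> x" using v(2) True .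
      ultimately have "v * c_f \<le> \<phi> x * fXgW f x w" using v(1) c_f by (intro mult_mono) auto
      then show ?thesis using True by simp
    qed (use \<phi>0[OF x] fXgW_nonneg[OF x w01] in simp)
  qed
  finally show ?thesis .
qed

lemma c_f_margin_le_half: "c_f * min (tx1 - x1) (x2 - tx2) \<le> 1/2"
proof -
  have "1 * c_f * (x2 - x1) \<le> cond_mean w1 (\<lambda>x. 1)"
    by (rule cond_mean_ge[of w1 x1 x2 "\<lambda>x. 1" 1 1]) (use x_order in auto)
  then have "c_f * (x2 - x1) \<le> 1" unfolding cond_mean_def using integral_fXgW w_unit by simp
  moreover have "c_f * (2 * min (tx1 - x1) (x2 - tx2)) \<le> c_f * (x2 - x1)"
    using x_order c_f by (intro mult_left_mono) (auto simp: min_def)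
  ultimately show ?thesis by linarith
qed


lemma cond_mean_split_at_level:
  assumes m: "mono m" and K: "\<And>x. \<bar>m x\<bar> \<le> K" and s: "m tx1 \<le> s" "s \<le> m tx2"
  defines "\<phi> \<equiv> \<lambda>x. max (m x - s) 0" and "\<psi> \<equiv> \<lambda>x. max (s - m x) 0"
  shows "cond_mean w1 m = s + cond_mean w1 \<phi> - cond_mean w1 \<psi>"
    and "cond_mean w2 m = s + cond_mean w2 \<phi> - cond_mean w2 \<psi>"
    and "C_F * cond_mean w1 \<phi> \<le> cond_mean w2 \<phi>"
    and "C_F * cond_mean w2 \<psi> \<le> cond_mean w1 \<psi>"
    and "(m tx2 - s) * c_f * (x2 - tx2) \<le> cond_mean w2 \<phi>"
    and "(s - m tx1) * c_f * (tx1 - x1) \<le> cond_mean w1 \<psi>"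
proof -
  have [measurable]: "m \<in> borel_measurable lborel" using borel_measurable_mono[OF m] by simp
  have \<phi>_meas[measurable]: "\<phi> \<in> borel_measurable lborel" and \<psi>_meas[measurable]: "\<psi> \<in> borel_measurable lborel"
    unfolding \<phi>_def \<psi>_def by measurable
  have "\<bar>s\<bar> \<le> K" using s K[of tx1] K[of tx2] by linarith
  then have \<phi>K: "0 \<le> \<phi> x" "\<phi> x \<le> 2 * K" "\<bar>\<phi> x\<bar> \<le> 2 * K"
    and \<psi>K: "0 \<le> \<psi> x" "\<psi> x \<le> 2 * K" "\<bar>\<psi> x\<bar> \<le> 2 * K" for x
    unfolding \<phi>_def \<psi>_def using K[of x] by auto
  have "cond_mean w m = s + cond_mean w \<phi> - cond_mean w \<psi>" if w: "w \<in> {0..1}" for w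
  proof -
    have "m = (\<lambda>x. (\<phi> x - \<psi> x) + s)" unfolding \<phi>_def \<psi>_def by (rule ext) auto
    moreover have "\<bar>\<phi> x - \<psi> x\<bar> \<le> 4 * K" for x using \<phi>K[of x] \<psi>K[of x] by linarith
    ultimately show ?thesis
      using cond_mean_add_const[of "\<lambda>x. \<phi> x - \<psi> x" "4 * K" w s]
        cond_mean_diff[OF \<phi>_meas \<psi>_meas \<phi>K(3) \<psi>K(3) w] w by simp
  qed
  then show "cond_mean w1 m = s + cond_mean w1 \<phi> - cond_mean w1 \<psi>"
    and "cond_mean w2 m = s + cond_mean w2 \<phi> - cond_mean w2 \<psi>" using w_unit by auto
  have "mono \<phi>" unfolding \<phi>_def by (intro monoI) (use monoD[OF m] in \<open>fastforce simp: max_def\<close>)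
  moreover have "\<phi> x = 0" if "x \<le> tx1" for x
    using monoD[OF m that] s unfolding \<phi>_def by simp
  ultimately show "C_F * cond_mean w1 \<phi> \<le> cond_mean w2 \<phi>"
    by (rule cond_mean_upper_dominance[OF _ \<phi>K(1,2)])
  have "antimono \<psi>" unfolding \<psi>_def by (intro antimonoI) (use monoD[OF m] in \<open>fastforce simp: max_def\<close>)
  moreover have "\<psi> x = 0" if "tx2 \<le> x" for x
    using monoD[OF m that] s unfolding \<psi>_def by simp
  ultimately show "C_F * cond_mean w2 \<psi> \<le> cond_mean w1 \<psi>"
    by (rule cond_mean_lower_dominance[OF _ \<psi>K(1,2)])
  show "(m tx2 - s) * c_f * (x2 - tx2) \<le> cond_mean w2 \<phi>"
  proof (rule cond_mean_ge[OF _ _ _ _ \<phi>_meas \<phi>K(3)])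
    show "m tx2 - s \<le> \<phi> x" if "x \<in> {tx2..x2}" for x
      using monoD[OF m, of tx2 x] that unfolding \<phi>_def by auto
  qed (use s x_order \<phi>K in auto)
  show "(s - m tx1) * c_f * (tx1 - x1) \<le> cond_mean w1 \<psi>"
  proof (rule cond_mean_ge[OF _ _ _ _ \<psi>_meas \<psi>K(3)])
    show "s - m tx1 \<le> \<psi> x" if "x \<in> {x1..tx1}" for x
      using monoD[OF m, of x tx1] that unfolding \<psi>_def by auto
  qed (use s x_order \<psi>K in auto)
qed

lemma cond_mean_separation:
  assumes m: "mono m" and K: "\<And>x. \<bar>m x\<bar> \<le> K"
  defines "k \<equiv> min (C_F - 1) 2 * (c_f * min (tx1 - x1) (x2 - tx2)) / 4"
  shows "k * max \<bar>m tx1\<bar> \<bar>m tx2\<bar> \<le> cond_mean w2 m \<or> k * max \<bar>m tx1\<bar> \<bar>m tx2\<bar> \<le> - cond_mean w1 m"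
proof -
  define e where "e = c_f * min (tx1 - x1) (x2 - tx2)"
  have e: "0 < e" "e \<le> 1/2" unfolding e_def using c_f x_order c_f_margin_le_half by auto
  have k: "k = min (C_F - 1) 2 * e / 4" unfolding k_def e_def ..
  have tx12: "m tx1 \<le> m tx2" using x_order by (intro monoD[OF m]) simp
  show ?thesis
  proof (cases "- m tx1 \<le> m tx2")
    case True
    define s where "s = max (m tx1) 0"
    have s: "m tx1 \<le> s" "s \<le> m tx2" using True tx12 unfolding s_def by auto
    note split = cond_mean_split_at_level[OF m K s]
    have "(m tx2 - s) * e \<le> (m tx2 - s) * (c_f * (x2 - tx2))"
      unfolding e_def using s c_f by (intro mult_left_mono) auto
    then have "(m tx2 - s) * e \<le> cond_mean w2 (\<lambda>x. max (m x - s) 0)"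
      using split(5) by (simp add: mult.assoc)
    then have "k * m tx2 \<le> s + cond_mean w2 (\<lambda>x. max (m x - s) 0) - cond_mean w2 (\<lambda>x. max (s - m x) 0) \<or>
          k * m tx2 \<le> - (s + cond_mean w1 (\<lambda>x. max (m x - s) 0) - cond_mean w1 (\<lambda>x. max (s - m x) 0))"
      by (intro mean_separation_arith[OF C_F e k _ s(2) split(3,4)]) (simp add: s_def)
    moreover have "max \<bar>m tx1\<bar> \<bar>m tx2\<bar> = m tx2" using True tx12 by auto
    ultimately show ?thesis using split(1,2) by simp
  next
    case False
    define s where "s = min (m tx2) 0"
    have s: "m tx1 \<le> s" "s \<le> m tx2" using False tx12 unfolding s_def by auto
    note split = cond_mean_split_at_level[OF m K s]
    have "(s - m tx1) * e \<le> (s - m tx1) * (c_f * (tx1 - x1))"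
      unfolding e_def using s c_f by (intro mult_left_mono) auto
    then have "(- m tx1 - - s) * e \<le> cond_mean w1 (\<lambda>x. max (s - m x) 0)"
      using split(6) by (simp add: mult.assoc)
    then have "k * - m tx1 \<le> - s + cond_mean w1 (\<lambda>x. max (s - m x) 0) - cond_mean w1 (\<lambda>x. max (m x - s) 0) \<or>
          k * - m tx1 \<le> - (- s + cond_mean w2 (\<lambda>x. max (s - m x) 0) - cond_mean w2 (\<lambda>x. max (m x - s) 0))"
      by (intro mean_separation_arith[OF C_F e k _ _ split(4,3)]) (use s in \<open>simp_all add: s_def\<close>)
    moreover have "max \<bar>m tx1\<bar> \<bar>m tx2\<bar> = - m tx1" using False tx12 by auto
    ultimately show ?thesis using split(1,2) by auto
  qed
qed

lemma Top_square_ge_of_cond_mean_ge: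
  assumes w: "w \<in> {0..1}" and a: "a \<le> \<bar>cond_mean w \<phi>\<bar>" "0 \<le> a"
  shows "(a * c_W)\<^sup>2 \<le> (Top f \<phi> w)\<^sup>2"
proof -
  have "a * c_W \<le> \<bar>cond_mean w \<phi>\<bar> * fW f w"
    using a c_W fW_ge[OF w] by (intro mult_mono) auto
  also have "\<dots> = \<bar>Top f \<phi> w\<bar>" using Top_eq_cond_mean[OF w] fW_pos[OF w] by (simp add: abs_mult)
  finally show ?thesis using a c_W by (metis abs_ge_zero power2_abs power_mono mult_nonneg_nonneg less_imp_le)
qed

text \<open>The separated conditional mean persists on a \<open>w\<close>-interval of length at least
  \<open>min (1 - w2) w1\<close>, by monotonicity in \<open>w\<close>; this is what bounds \<open>T m\<close> from below.\<close>

lemma norm2_Top_ge_of_mono: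
  assumes m: "mono m" and K: "\<And>x. \<bar>m x\<bar> \<le> K"
  shows "min (1 - w2) w1 * min (C_F - 1) 2 * c_W * c_f / 4 * min (tx1 - x1) (x2 - tx2)
           * max \<bar>m tx1\<bar> \<bar>m tx2\<bar> \<le> norm2 (Top f m)"
proof -
  define k where "k = min (C_F - 1) 2 * (c_f * min (tx1 - x1) (x2 - tx2)) / 4"
  define M where "M = max \<bar>m tx1\<bar> \<bar>m tx2\<bar>"
  define \<mu> where "\<mu> = min (1 - w2) w1"
  define \<beta> where "\<beta> = k * M * c_W"
  have \<mu>: "0 < \<mu>" "\<mu> \<le> 1" unfolding \<mu>_def using w_order by auto
  have kM: "0 \<le> k * M" unfolding k_def M_def using C_F c_f x_order by simp
  then have \<beta>0: "0 \<le> \<beta>" unfolding \<beta>_def using c_W by simp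
  have [measurable]: "m \<in> borel_measurable lborel" using borel_measurable_mono[OF m] by simp
  have T_int: "set_integrable lborel {0..1} (\<lambda>w. (Top f m w)\<^sup>2)"
    by (rule Top_square_integrable[OF L2_of_bounded[OF _ K]]) simp
  have T_ge: "\<beta>\<^sup>2 \<le> (Top f m w)\<^sup>2" if "w \<in> {0..1}" "k * M \<le> \<bar>cond_mean w m\<bar>" for w
    unfolding \<beta>_def using Top_square_ge_of_cond_mean_ge[OF that kM] .
  have "\<beta>\<^sup>2 * \<mu> \<le> (LINT w:{0..1}|lborel. (Top f m w)\<^sup>2)"
    using cond_mean_separation[OF m K, folded k_def M_def]
  proof
    assume upper: "k * M \<le> cond_mean w2 m"
    have "\<beta>\<^sup>2 * (1 - w2) \<le> (LINT w:{0..1}|lborel. (Top f m w)\<^sup>2)"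
    proof (rule set_integral_square_ge_on_subinterval[OF T_int])
      fix w assume w: "w \<in> {w2<..<1}"
      have "cond_mean w2 m \<le> cond_mean w m" by (rule cond_mean_mono_in_w[OF m K]) (use w w_order in auto)
      then show "\<beta>\<^sup>2 \<le> (Top f m w)\<^sup>2" using upper w w_order by (intro T_ge) auto
    qed (use w_order in auto)
    moreover have "\<beta>\<^sup>2 * \<mu> \<le> \<beta>\<^sup>2 * (1 - w2)" unfolding \<mu>_def by (intro mult_left_mono) auto
    ultimately show ?thesis by linarith
  next
    assume lower: "k * M \<le> - cond_mean w1 m"
    have "\<beta>\<^sup>2 * (w1 - 0) \<le> (LINT w:{0..1}|lborel. (Top f m w)\<^sup>2)"
    proof (rule set_integral_square_ge_on_subinterval[OF T_int])
      fix w assume w: "w \<in> {0<..<w1}"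
      have "cond_mean w m \<le> cond_mean w1 m" by (rule cond_mean_mono_in_w[OF m K]) (use w w_order in auto)
      then show "\<beta>\<^sup>2 \<le> (Top f m w)\<^sup>2" using lower w w_order by (intro T_ge) auto
    qed (use w_order in auto)
    moreover have "\<beta>\<^sup>2 * \<mu> \<le> \<beta>\<^sup>2 * (w1 - 0)" unfolding \<mu>_def by (intro mult_left_mono) auto
    ultimately show ?thesis by linarith
  qed
  then have "\<beta> * sqrt \<mu> \<le> norm2 (Top f m)"
    unfolding norm2_def using \<beta>0 \<mu> by (metis real_sqrt_le_mono real_sqrt_mult real_sqrt_abs abs_of_nonneg)
  moreover have "\<mu> \<le> sqrt \<mu>" using \<mu> by (simp add: real_le_rsqrt power2_eq_square mult_left_le)
  then have "\<beta> * \<mu> \<le> \<beta> * sqrt \<mu>" using \<beta>0 by (rule mult_left_mono)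
  ultimately show ?thesis unfolding \<beta>_def k_def M_def \<mu>_def by (simp add: field_simps)
qed

definition Cbar :: real where
  "Cbar = (sqrt (tx2 - tx1) / min (tx1 - x1) (x2 - tx2))
            / (min (1 - w2) w1 * min (C_F - 1) 2 * c_W * c_f / 4)"

lemma Cbar_nonneg: "0 \<le> Cbar"
  unfolding Cbar_def using x_order w_order C_F c_W c_f by simp

lemma norm2t_le_Cbar_of_mono:
  assumes m: "mono m" and K: "\<And>x. \<bar>m x\<bar> \<le> K"
  shows "norm2t tx1 tx2 m \<le> Cbar * norm2 (Top f m)"
proof -
  define c where "c = min (1 - w2) w1 * min (C_F - 1) 2 * c_W * c_f / 4"
  define \<delta> where "\<delta> = min (tx1 - x1) (x2 - tx2)"
  have c: "0 < c" unfolding c_def using w_order C_F c_W c_f by simp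
  have \<delta>: "0 < \<delta>" unfolding \<delta>_def using x_order by simp
  have "norm2t tx1 tx2 m \<le> sqrt (tx2 - tx1) * max \<bar>m tx1\<bar> \<bar>m tx2\<bar>"
    using norm2t_le_of_mono[OF m] x_order by simp
  also have "\<dots> = Cbar * (c * \<delta> * max \<bar>m tx1\<bar> \<bar>m tx2\<bar>)"
    unfolding Cbar_def c_def[symmetric] \<delta>_def[symmetric] using c \<delta> by simp
  also have "\<dots> \<le> Cbar * norm2 (Top f m)"
    using norm2_Top_ge_of_mono[OF m K] Cbar_nonneg
    unfolding c_def \<delta>_def by (intro mult_left_mono) auto
  finally show ?thesis .
qed

lemma norm2t_le_Cbar_of_mono_on:
  assumes u: "L2 u" and m: "mono_on {0..1} m" and ae: "AE x in lborel. x \<in> {0..1} \<longrightarrow> u x = m x"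
  shows "norm2t tx1 tx2 u \<le> Cbar * norm2 (Top f u)"
proof -
  obtain m' where m': "mono m'" "\<And>x. \<bar>m' x\<bar> \<le> \<bar>m 0\<bar> + \<bar>m 1\<bar>"
    and eq: "\<And>x. x \<in> {0..1} \<Longrightarrow> m' x = m x"
    using mono_extension_of_mono_on_unit_interval[OF m] by blast
  have [measurable]: "u \<in> borel_measurable lborel" "m' \<in> borel_measurable lborel"
    using L2_measurable[OF u] borel_measurable_mono[OF m'(1)] by auto
  have ae': "AE x in lborel. x \<in> {0..1} \<longrightarrow> u x = m' x" using ae by eventually_elim (simp add: eq)
  have "norm2t tx1 tx2 u = norm2t tx1 tx2 m'"
    unfolding norm2t_def using x_order
    by (subst set_lebesgue_integral_cong_AE[where g="\<lambda>x. (m' x)\<^sup>2"]) (auto intro: eventually_mono[OF ae'])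
  moreover have "Top f u = Top f m'"
    unfolding Top_def
    by (intro ext set_lebesgue_integral_cong_AE) (auto intro: eventually_mono[OF ae'])
  ultimately show ?thesis using norm2t_le_Cbar_of_mono[OF m'] by simp
qed

lemma norm2t_le_Cbar:
  assumes "inM u"
  shows "norm2t tx1 tx2 u \<le> Cbar * norm2 (Top f u)"
proof -
  obtain m where u: "L2 u" and m: "mono_on {0..1} m \<or> antimono_on {0..1} m"
    and ae: "AE x in lborel. x \<in> {0..1} \<longrightarrow> u x = m x"
    using assms unfolding inM_def by blast
  from m show ?thesis
  proof
    assume "mono_on {0..1} m"
    then show ?thesis by (rule norm2t_le_Cbar_of_mono_on[OF u _ ae])
  next
    assume "antimono_on {0..1} m"
    then have "mono_on {0..1} (\<lambda>x. - m x)" by (auto simp: monotone_on_def)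
    moreover have "AE x in lborel. x \<in> {0..1} \<longrightarrow> - u x = - m x" using ae by eventually_elim simp
    ultimately have "norm2t tx1 tx2 (\<lambda>x. - u x) \<le> Cbar * norm2 (Top f (\<lambda>x. - u x))"
      by (rule norm2t_le_Cbar_of_mono_on[OF L2_uminus[OF u]])
    then show ?thesis unfolding Top_uminus by (simp add: norm2t_def norm2_def)
  qed
qed

end

theorem theorem4:
  fixes f :: "real \<Rightarrow> real \<Rightarrow> real"
    and x1 tx1 tx2 x2 w1 w2 C_F C_T c_f c_W C_W :: real
    and g' g'' :: "real \<Rightarrow> real"
  assumes pts: "0 \<le> x1" "x1 < tx1" "tx1 < tx2" "tx2 < x2" "x2 \<le> 1"
      and wpts: "0 < w1" "w1 < w2" "w2 < 1"
      and dens: "joint_density f"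
      and A1a: "\<And>x w' w''. x \<in> {0<..<1} \<Longrightarrow> w' \<in> {0<..<1} \<Longrightarrow> w'' \<in> {0<..<1} \<Longrightarrow>
                 w' \<le> w'' \<Longrightarrow> FXgW f x w' \<ge> FXgW f x w''"
      and CF: "C_F > 1"
      and A1b1: "\<And>x. x \<in> {0<..<x2} \<Longrightarrow> FXgW f x w1 \<ge> C_F * FXgW f x w2"
      and A1b2: "\<And>x. x \<in> {x1<..<1} \<Longrightarrow> C_F * (1 - FXgW f x w1) \<le> 1 - FXgW f x w2"
      and A2i: "set_integrable (lborel \<Otimes>\<^sub>M lborel) ({0..1} \<times> {0..1}) (\<lambda>(x,w). (f x w)\<^sup>2)"
               "(LINT p:({0..1} \<times> {0..1})|(lborel \<Otimes>\<^sub>M lborel). (\<lambda>(x,w). (f x w)\<^sup>2) p) \<le> C_T"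
      and A2ii: "c_f > 0" "\<And>x w. x \<in> {x1..x2} \<Longrightarrow> w \<in> {w1, w2} \<Longrightarrow> fXgW f x w \<ge> c_f"
      and A2iii: "0 < c_W" "c_W \<le> C_W" "\<And>w. w \<in> {0..1} \<Longrightarrow> c_W \<le> fW f w \<and> fW f w \<le> C_W"
      and g: "L2 g'" "L2 g''"
      and hex: "\<exists>h. L2 h \<and> inM (\<lambda>x. g' x - g'' x + h x) \<and>
                 norm2t tx1 tx2 h
                 + (sqrt (tx2 - tx1) / min (tx1 - x1) (x2 - tx2))
                   / (min (1 - w2) w1 * min (C_F - 1) 2 * c_W * c_f / 4)
                   * opnorm f * norm2 h
                 < norm2t tx1 tx2 (\<lambda>x. g' x - g'' x)"
  shows "norm2 (Top f (\<lambda>x. g' x - g'' x)) > 0"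
proof -
  interpret monotone_instrument f x1 tx1 tx2 x2 w1 w2 C_F c_f c_W
    using pts wpts dens A1a CF A1b1 A1b2 A2i(1) A2ii A2iii
    by unfold_locales (auto simp: joint_density_def)
  define D where "D x = g' x - g'' x" for x
  obtain h where h: "L2 h" and u: "inM (\<lambda>x. D x + h x)"
    and gap: "norm2t tx1 tx2 h + Cbar * opnorm f * norm2 h < norm2t tx1 tx2 D"
    using hex unfolding Cbar_def D_def[abs_def] by blast
  have D: "L2 D" unfolding D_def[abs_def] using L2_diff[OF g] .
  have "norm2t tx1 tx2 D \<le> norm2t tx1 tx2 (\<lambda>x. D x + h x) + norm2t tx1 tx2 h"
    using norm2t_add_le[OF L2_add[OF D h] L2_uminus[OF h], of tx1 tx2] pts by (simp add: norm2t_def)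
  also have "\<dots> \<le> Cbar * norm2 (Top f (\<lambda>x. D x + h x)) + norm2t tx1 tx2 h"
    using norm2t_le_Cbar[OF u] by simp
  also have "\<dots> \<le> Cbar * (norm2 (Top f D) + opnorm f * norm2 h) + norm2t tx1 tx2 h"
    using norm2_Top_add_le[OF D h] norm2_Top_le_opnorm[OF h] Cbar_nonneg
    by (simp add: mult_left_mono)
  finally have "0 < Cbar * norm2 (Top f D)" using gap by (simp add: algebra_simps)
  then show ?thesis using Cbar_nonneg unfolding D_def[abs_def] by (simp add: zero_less_mult_iff)
qed

end
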